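(* Let $k=k(n)$ and $m=m(n)$ be functions of $n$ such that $m\geq n$ and $\liminf_{n\rightarrow\infty} \frac{k^2n}{m\log n}>1$. Then asymptotically almost surely $G(n,m,k)$ contains no connected component of size $s$ with $e\,n^{8/9}\leq s\leq \min\{m/k,n/2\}$.
   Context: The uniform random intersection graph $G(n,m,k)$ (for positive integers $k\le m$) is the random graph on a set $V$ of $n$ nodes defined as follows: fix a set $M$ of $m$ colours; to each node $v\in V$ assign a subset $F_v\subseteq M$ of exactly $k$ distinct colours, chosen uniformly at random among all $k$-subsets of $M$, independently for different nodes; distinct nodes $u,v$ are joined by an edge if and only if $F_u\cap F_v\neq\emptyset$. An event holds asymptotically almost surely if its probability tends to $1$ as $n\rightarrow\infty$. Here $\log$ denotes the natural logarithm and $e$ is Euler's number. *)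

theory Defs
  imports "HOL-Probability.Probability"
begin

definition colour_sets :: "nat \<Rightarrow> nat \<Rightarrow> nat set set" where
  "colour_sets m k = {F. F \<subseteq> {..<m} \<and> card F = k}"

text \<open>Uniform random intersection graph G(n,m,k) on node set V = {0..<n}:
  the random colour assignment v \<mapsto> F_v, uniform over all assignments of k-subsets
  (equivalently, independent uniform k-subsets for each node).\<close>
definition RIG :: "nat \<Rightarrow> nat \<Rightarrow> nat \<Rightarrow> (nat \<Rightarrow> nat set) pmf" where
  "RIG n m k = pmf_of_set (PiE {..<n} (\<lambda>_. colour_sets m k))"

definition rig_edges :: "nat \<Rightarrow> (nat \<Rightarrow> nat set) \<Rightarrow> (nat \<times> nat) set" where
  "rig_edges n F = {(u, v). u < n \<and> v < n \<and> u \<noteq> v \<and> F u \<inter> F v \<noteq> {}}"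

definition rig_component :: "nat \<Rightarrow> (nat \<Rightarrow> nat set) \<Rightarrow> nat set \<Rightarrow> bool" where
  "rig_component n F C \<longleftrightarrow>
     (\<exists>v<n. C = {u. u < n \<and> (v, u) \<in> (rig_edges n F)\<^sup>*})"

end

theory Submission
  imports Defs "HOL-Real_Asymp.Real_Asymp"
begin

text \<open>A component of size s is a set C of s nodes sharing no colour with the other n - s
  nodes. Put u = ceil(sk/4). Either C uses fewer than u colours, which for fixed C has
  probability at most sum_{j<u} (m choose j) ((j choose k)/(m choose k))^s, or C uses at least
  u colours and every other node avoids them, which has probability at most
  ((m-u choose k)/(m choose k))^(n-s) <= exp (-uk(n-s)/m). There are
  (n choose s) <= (en/s)^s <= n^(s/9) choices of C because s >= e n^(8/9). Using
  k^2 n >= m ln n, sk <= m and s <= n/2, both resulting terms are at most exp (-s/72), and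
  summing over the at most n + 1 sizes s gives a bound that tends to 0.\<close>

section \<open>Elementary estimates\<close>

lemma power_div_fact_le_exp:
  fixes x :: real
  assumes "0 \<le> x"
  shows "x ^ s / fact s \<le> exp x"
proof -
  have "x ^ s / fact s \<le> (\<Sum>i\<le>s. x ^ i / fact i)"
    using assms by (intro member_le_sum) auto
  also have "\<dots> \<le> exp x"
    using assms summable_exp_generic[of x]
    by (auto simp: exp_def divide_inverse ac_simps intro!: sum_le_suminf)
  finally show ?thesis .
qed

lemma binomial_le_exp_mult_div_power:
  assumes "s \<ge> 1"
  shows "real (n choose s) \<le> (exp 1 * real n / real s) ^ s"
proof -
  have "real (n choose s) * fact s \<le> real n ^ s"
    by (metis binomial_fact_pow of_nat_fact of_nat_le_iff of_nat_mult of_nat_power)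
  then have "real (n choose s) \<le> real n ^ s / fact s"
    by (simp add: field_simps)
  also have "\<dots> = (real n / real s) ^ s * (real s ^ s / fact s)"
    using assms by (simp add: field_simps power_divide)
  also have "\<dots> \<le> (real n / real s) ^ s * exp 1 ^ s"
    using power_div_fact_le_exp[of "real s" s]
    by (intro mult_left_mono) (auto simp: exp_of_nat_mult[symmetric])
  also have "\<dots> = (exp 1 * real n / real s) ^ s"
    by (simp add: power_mult_distrib[symmetric] ac_simps)
  finally show ?thesis .
qed

lemma binomial_mult_power_le:
  assumes "a \<le> m"
  shows "real (a choose k) * real m ^ k \<le> real (m choose k) * real a ^ k"
proof (induction k)
  case 0
  then show ?case by simp
next
  case (Suc k)
  have absorb: "real (b choose Suc k) * (real k + 1) = real (b choose k) * real (b - k)" for b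
    by (metis binomial_absorb_comp binomial_absorption add.commute mult.commute
        of_nat_Suc of_nat_mult plus_1_eq_Suc)
  have factor: "real (a - k) * real m \<le> real (m - k) * real a"
  proof (cases "k \<le> a")
    case True
    from assms have "real a * real k \<le> real m * real k"
      by (simp add: mult_right_mono)
    with True assms show ?thesis by (simp add: of_nat_diff algebra_simps)
  qed simp
  have "real (a choose Suc k) * real m ^ Suc k * (real k + 1)
        = (real (a choose k) * real m ^ k) * (real (a - k) * real m)"
    by (simp add: absorb[symmetric] ac_simps)
  also have "\<dots> \<le> (real (m choose k) * real a ^ k) * (real (m - k) * real a)"
    by (rule mult_mono) (use Suc.IH factor in auto)
  also have "\<dots> = real (m choose Suc k) * real a ^ Suc k * (real k + 1)"
    by (simp add: absorb[symmetric] ac_simps)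
  finally show ?case by (simp del: of_nat_Suc)
qed

lemma binomial_ratio_le_power:
  assumes "a \<le> m" "k \<le> m"
  shows "real (a choose k) / real (m choose k) \<le> (real a / real m) ^ k"
proof (cases "m = 0")
  case False
  have "real (m choose k) > 0" using assms by simp
  with False binomial_mult_power_le[OF assms(1), of k] show ?thesis
    by (simp add: field_simps power_divide)
qed (use assms in simp)

lemma binomial_ratio_power_le_exp:
  assumes "u \<le> m" "k \<le> m" "0 < m"
  shows "(real (m - u choose k) / real (m choose k)) ^ j \<le> exp (- real (k * j) * real u / real m)"
proof -
  have "real (m - u choose k) / real (m choose k) \<le> (real (m - u) / real m) ^ k"
    using assms by (intro binomial_ratio_le_power) auto
  also have "\<dots> \<le> exp (- real u / real m) ^ k"
    using assms exp_ge_add_one_self[of "- real u / real m"]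
    by (intro power_mono) (auto simp: of_nat_diff field_simps)
  finally have "(real (m - u choose k) / real (m choose k)) ^ j \<le> exp (- real u / real m) ^ (k * j)"
    by (auto intro!: power_mono simp: power_mult)
  also have "\<dots> = exp (- real (k * j) * real u / real m)"
    by (simp add: exp_of_nat_mult[symmetric])
  finally show ?thesis .
qed

lemma ln_le_1_plus_quarter:
  fixes x :: real
  assumes "x > 0"
  shows "ln x \<le> 1 + x / 4"
proof -
  have "(2::real) * 2 \<le> exp 1 * exp 1"
    using exp_ge_add_one_self[of "1::real"] by (intro mult_mono) auto
  then have "exp 2 \<ge> (4::real)"
    by (simp add: exp_add[symmetric])
  have "ln (x / exp 2) \<le> x / exp 2 - 1"
    using assms by (intro ln_le_minus_one) auto
  then have "ln x - 2 \<le> x / exp 2 - 1"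
    using assms by (simp add: ln_div)
  moreover have "x / exp 2 \<le> x / 4"
    using assms \<open>exp 2 \<ge> 4\<close> by (intro divide_left_mono) auto
  ultimately show ?thesis by linarith
qed

lemma le_exp_div_16:
  fixes x :: real
  assumes "x \<ge> 512"
  shows "x \<le> exp (x / 16)"
proof -
  have "x \<le> (x / 16) ^ 2 / fact 2"
    using assms by (simp add: fact_numeral power2_eq_square field_simps mult_right_mono)
  also have "\<dots> \<le> exp (x / 16)"
    using assms by (intro power_div_fact_le_exp) simp
  finally show ?thesis .
qed

lemma Collect_PiE_forall_eq:
  assumes "S \<subseteq> I"
  shows "{f \<in> PiE I B. \<forall>i\<in>S. P i (f i)} = PiE I (\<lambda>i. if i \<in> S then {x \<in> B i. P i x} else B i)"
proof (intro set_eqI iffI)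
  fix f assume f: "f \<in> PiE I (\<lambda>i. if i \<in> S then {x \<in> B i. P i x} else B i)"
  have fi: "f i \<in> (if i \<in> S then {x \<in> B i. P i x} else B i)" if "i \<in> I" for i
    using f that by (rule PiE_mem)
  have "f \<in> PiE I B"
  proof (rule PiE_I)
    show "f i \<in> B i" if "i \<in> I" for i using fi[OF that] by (simp split: if_splits)
    show "f i = undefined" if "i \<notin> I" for i using f that by (rule PiE_arb)
  qed
  moreover have "\<forall>i\<in>S. P i (f i)" using fi assms by force
  ultimately show "f \<in> {f \<in> PiE I B. \<forall>i\<in>S. P i (f i)}" by blast
next
  fix f assume "f \<in> {f \<in> PiE I B. \<forall>i\<in>S. P i (f i)}"
  then show "f \<in> PiE I (\<lambda>i. if i \<in> S then {x \<in> B i. P i x} else B i)"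
    by (force intro!: PiE_I dest: PiE_mem PiE_arb)
qed

lemma inj_on_restrict_pair:
  "inj_on (\<lambda>f. (restrict f S, restrict f (I - S))) (PiE I B)"
proof (rule inj_onI)
  fix f g assume f: "f \<in> PiE I B" and g: "g \<in> PiE I B"
    and eq: "(restrict f S, restrict f (I - S)) = (restrict g S, restrict g (I - S))"
  show "f = g"
  proof (rule PiE_ext[OF f g])
    fix i assume "i \<in> I"
    then show "f i = g i"
      using eq by (cases "i \<in> S") (auto dest!: fun_cong[of _ _ i])
  qed
qed

lemma prod_if_mem_const:
  assumes "S \<subseteq> I" "finite I"
  shows "(\<Prod>i\<in>I. if i \<in> S then a else b) = a ^ card S * b ^ (card I - card S)"
  using assms by (simp add: prod.If_cases Int_absorb1 Diff_eq[symmetric] card_Diff_subset finite_subset)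

section \<open>Counting colour assignments\<close>

definition colour_assignments :: "nat \<Rightarrow> nat \<Rightarrow> nat \<Rightarrow> (nat \<Rightarrow> nat set) set" where
  "colour_assignments n m k = PiE {..<n} (\<lambda>_. colour_sets m k)"

definition colour_closed :: "nat \<Rightarrow> (nat \<Rightarrow> nat set) \<Rightarrow> nat set \<Rightarrow> bool" where
  "colour_closed n F S \<longleftrightarrow> (\<forall>u\<in>S. \<forall>v\<in>{..<n} - S. F u \<inter> F v = {})"

lemma rig_component_subset:
  "rig_component n F C \<Longrightarrow> C \<subseteq> {..<n}"
  unfolding rig_component_def by auto

lemma rig_component_colour_closed:
  assumes "rig_component n F C"
  shows "colour_closed n F C"
  unfolding colour_closed_def
proof (intro ballI)
  fix u w
  assume u: "u \<in> C" and w: "w \<in> {..<n} - C"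
  obtain v where C: "C = {x. x < n \<and> (v, x) \<in> (rig_edges n F)\<^sup>*}"
    using assms unfolding rig_component_def by blast
  show "F u \<inter> F w = {}"
  proof (rule ccontr)
    assume "F u \<inter> F w \<noteq> {}"
    with u w C have "(u, w) \<in> rig_edges n F"
      unfolding rig_edges_def by auto
    with u C have "(v, w) \<in> (rig_edges n F)\<^sup>*"
      by (auto intro: rtrancl_into_rtrancl)
    with w C show False by auto
  qed
qed

lemma finite_colour_sets: "finite (colour_sets m k)"
  unfolding colour_sets_def by (rule finite_subset[of _ "Pow {..<m}"]) auto

lemma card_colour_sets: "card (colour_sets m k) = m choose k"
  unfolding colour_sets_def using n_subsets[of "{..<m}" k] by simp

lemma finite_colour_assignments: "finite (colour_assignments n m k)"
  unfolding colour_assignments_def by (simp add: finite_PiE finite_colour_sets)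

lemma card_colour_assignments: "card (colour_assignments n m k) = (m choose k) ^ n"
  unfolding colour_assignments_def by (simp add: card_PiE card_colour_sets)

lemma colour_assignment_subset:
  "F \<in> colour_assignments n m k \<Longrightarrow> v < n \<Longrightarrow> F v \<subseteq> {..<m}"
  unfolding colour_assignments_def colour_sets_def by (auto simp: PiE_iff)

lemma card_colours_within:
  assumes S: "S \<subseteq> {..<n}" and T: "T \<subseteq> {..<m}"
  shows "card {F \<in> colour_assignments n m k. \<forall>v\<in>S. F v \<subseteq> T}
         = (card T choose k) ^ card S * (m choose k) ^ (n - card S)"
proof -
  have within: "{X \<in> colour_sets m k. X \<subseteq> T} = {X. X \<subseteq> T \<and> card X = k}"
    using T unfolding colour_sets_def by blast
  have "{F \<in> colour_assignments n m k. \<forall>v\<in>S. F v \<subseteq> T}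
        = PiE {..<n} (\<lambda>v. if v \<in> S then {X. X \<subseteq> T \<and> card X = k} else colour_sets m k)"
    unfolding colour_assignments_def Collect_PiE_forall_eq[OF S, where P = "\<lambda>_ X. X \<subseteq> T"] within ..
  also have "card \<dots> = (\<Prod>v<n. if v \<in> S then card T choose k else m choose k)"
    using finite_subset[OF T]
    by (subst card_PiE) (auto intro!: prod.cong simp: n_subsets card_colour_sets)
  also have "\<dots> = (card T choose k) ^ card S * (m choose k) ^ (n - card S)"
    using S by (simp add: prod_if_mem_const)
  finally show ?thesis .
qed

lemma card_few_colours:
  assumes S: "S \<subseteq> {..<n}"
  shows "card {F \<in> colour_assignments n m k. card (\<Union>(F ` S)) < u0}
     \<le> (\<Sum>u<u0. (m choose u) * (u choose k) ^ card S * (m choose k) ^ (n - card S))"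
proof -
  let ?within = "\<lambda>T. {F \<in> colour_assignments n m k. \<forall>v\<in>S. F v \<subseteq> T}"
  let ?Ts = "\<lambda>u. {T. T \<subseteq> {..<m} \<and> card T = u}"
  have finTs: "finite (?Ts u)" for u
    by (rule finite_subset[of _ "Pow {..<m}"]) auto
  have "{F \<in> colour_assignments n m k. card (\<Union>(F ` S)) < u0} \<subseteq> (\<Union>u<u0. \<Union>T\<in>?Ts u. ?within T)"
  proof
    fix F
    assume F: "F \<in> {F \<in> colour_assignments n m k. card (\<Union>(F ` S)) < u0}"
    with S have "\<Union>(F ` S) \<subseteq> {..<m}"
      by (auto dest: colour_assignment_subset)
    with F show "F \<in> (\<Union>u<u0. \<Union>T\<in>?Ts u. ?within T)"
      by (intro UN_I[of "card (\<Union>(F ` S))"] UN_I[of "\<Union>(F ` S)"]) auto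
  qed
  then have "card {F \<in> colour_assignments n m k. card (\<Union>(F ` S)) < u0}
      \<le> card (\<Union>u<u0. \<Union>T\<in>?Ts u. ?within T)"
    by (intro card_mono) (auto intro!: finite_UN_I finTs simp: finite_colour_assignments)
  also have "\<dots> \<le> (\<Sum>u<u0. \<Sum>T\<in>?Ts u. card (?within T))"
    by (rule order_trans[OF card_UN_le sum_mono]) (auto intro: card_UN_le finTs)
  also have "\<dots> = (\<Sum>u<u0. (m choose u) * (u choose k) ^ card S * (m choose k) ^ (n - card S))"
    by (intro sum.cong refl) (simp add: card_colours_within[OF S] n_subsets)
  finally show ?thesis .
qed

lemma card_closed_many_colours:
  assumes S: "S \<subseteq> {..<n}"
  shows "card {F \<in> colour_assignments n m k. u0 \<le> card (\<Union>(F ` S)) \<and> colour_closed n F S}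
     \<le> (m choose k) ^ card S * (m - u0 choose k) ^ (n - card S)"
proof -
  let ?L = "{F \<in> colour_assignments n m k. u0 \<le> card (\<Union>(F ` S)) \<and> colour_closed n F S}"
  let ?D = "{..<n} - S"
  let ?P = "{G \<in> PiE S (\<lambda>_. colour_sets m k). u0 \<le> card (\<Union>(G ` S))}"
  let ?Q = "\<lambda>G. PiE ?D (\<lambda>_. {X. X \<subseteq> {..<m} - \<Union>(G ` S) \<and> card X = k})"
  have finS: "finite S" using S finite_subset by blast
  have finP: "finite ?P" by (auto intro!: finite_PiE finS finite_colour_sets)
  have finQ: "finite (?Q G)" for G
    by (intro finite_PiE) (auto intro: finite_subset[of _ "Pow {..<m}"])
  \<comment> \<open>Split an assignment into its restrictions to \<open>S\<close> and to the other nodes; closedness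
      confines the latter to the colours not used on \<open>S\<close>.\<close>
  have inj: "inj_on (\<lambda>F. (restrict F S, restrict F ?D)) ?L"
    by (rule inj_on_subset[OF inj_on_restrict_pair]) (auto simp: colour_assignments_def)
  have "(\<lambda>F. (restrict F S, restrict F ?D)) ` ?L \<subseteq> Sigma ?P ?Q"
  proof
    fix p assume "p \<in> (\<lambda>F. (restrict F S, restrict F ?D)) ` ?L"
    then obtain F where p: "p = (restrict F S, restrict F ?D)" and F: "F \<in> colour_assignments n m k"
      "u0 \<le> card (\<Union>(F ` S))" "colour_closed n F S"
      by blast
    have Fv: "F v \<in> colour_sets m k" if "v < n" for v
      using F(1) that unfolding colour_assignments_def by auto
    have "F v \<subseteq> {..<m} - \<Union>(F ` S) \<and> card (F v) = k" if "v \<in> ?D" for v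
      using F(3) Fv[of v] that unfolding colour_closed_def colour_sets_def by blast
    with Fv F(2) S show "p \<in> Sigma ?P ?Q"
      unfolding p
      by (auto simp: PiE_iff)
  qed
  then have "card ?L \<le> card (Sigma ?P ?Q)"
    by (intro card_inj_on_le[OF inj]) (auto intro: finite_SigmaI finP finQ)
  also have "\<dots> = (\<Sum>G\<in>?P. card (?Q G))"
    by (rule card_SigmaI) (auto intro: finP finQ)
  also have "\<dots> \<le> (\<Sum>G\<in>?P. (m - u0 choose k) ^ (n - card S))"
  proof (rule sum_mono)
    fix G assume G: "G \<in> ?P"
    then have "\<Union>(G ` S) \<subseteq> {..<m}"
      unfolding colour_sets_def by (auto simp: PiE_iff)
    then have "card ({..<m} - \<Union>(G ` S)) \<le> m - u0"
      using G by (simp add: card_Diff_subset finite_subset diff_le_mono2)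
    moreover have "card ?D = n - card S"
      using S by (simp add: card_Diff_subset finS)
    ultimately show "card (?Q G) \<le> (m - u0 choose k) ^ (n - card S)"
      by (simp add: card_PiE n_subsets power_mono binomial_right_mono)
  qed
  also have "\<dots> = card ?P * (m - u0 choose k) ^ (n - card S)"
    by simp
  also have "\<dots> \<le> card (PiE S (\<lambda>_. colour_sets m k)) * (m - u0 choose k) ^ (n - card S)"
    by (intro mult_right_mono card_mono) (auto intro!: finite_PiE finS finite_colour_sets)
  also have "\<dots> = (m choose k) ^ card S * (m - u0 choose k) ^ (n - card S)"
    by (simp add: card_PiE finS card_colour_sets)
  finally show ?thesis .
qed

section \<open>Probability bounds\<close>

lemma measure_RIG:
  assumes "k \<le> m"
  shows "measure_pmf.prob (RIG n m k) E
         = card {F \<in> colour_assignments n m k. F \<in> E} / real (m choose k) ^ n"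
proof -
  have "colour_assignments n m k \<noteq> {}"
    using assms card_colour_assignments[of n m k] by (auto simp: card_eq_0_iff)
  then show ?thesis
    unfolding RIG_def colour_assignments_def[symmetric]
    by (simp add: measure_pmf_of_set finite_colour_assignments card_colour_assignments Int_def)
qed

lemma prob_few_colours:
  assumes S: "S \<subseteq> {..<n}" and "k \<le> m"
  shows "measure_pmf.prob (RIG n m k) {F. card (\<Union>(F ` S)) < u0}
     \<le> (\<Sum>u<u0. real (m choose u) * (real (u choose k) / real (m choose k)) ^ card S)"
proof -
  have pos: "real (m choose k) > 0" using assms by simp
  have "card S \<le> n" using S by (metis card_lessThan card_mono finite_lessThan)
  then have split: "real (m choose k) ^ n = real (m choose k) ^ card S * real (m choose k) ^ (n - card S)"
    by (simp add: power_add[symmetric])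
  have "measure_pmf.prob (RIG n m k) {F. card (\<Union>(F ` S)) < u0}
      \<le> real (\<Sum>u<u0. (m choose u) * (u choose k) ^ card S * (m choose k) ^ (n - card S))
        / real (m choose k) ^ n"
    unfolding measure_RIG[OF \<open>k \<le> m\<close>] using pos card_few_colours[OF S, of m k u0]
    by (intro divide_right_mono of_nat_mono) auto
  also have "\<dots> = (\<Sum>u<u0. real (m choose u) * (real (u choose k) / real (m choose k)) ^ card S)"
    unfolding split of_nat_sum sum_divide_distrib
    by (intro sum.cong refl) (use pos in \<open>simp add: power_divide\<close>)
  finally show ?thesis .
qed

lemma prob_closed_many_colours:
  assumes S: "S \<subseteq> {..<n}" and "k \<le> m"
  shows "measure_pmf.prob (RIG n m k) {F. u0 \<le> card (\<Union>(F ` S)) \<and> colour_closed n F S}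
     \<le> (real (m - u0 choose k) / real (m choose k)) ^ (n - card S)"
proof -
  have pos: "real (m choose k) > 0" using assms by simp
  have "card S \<le> n" using S by (metis card_lessThan card_mono finite_lessThan)
  then have split: "real (m choose k) ^ n = real (m choose k) ^ card S * real (m choose k) ^ (n - card S)"
    by (simp add: power_add[symmetric])
  have "measure_pmf.prob (RIG n m k) {F. u0 \<le> card (\<Union>(F ` S)) \<and> colour_closed n F S}
      \<le> real ((m choose k) ^ card S * (m - u0 choose k) ^ (n - card S)) / real (m choose k) ^ n"
    unfolding measure_RIG[OF \<open>k \<le> m\<close>] using pos card_closed_many_colours[OF S, of m k u0]
    by (intro divide_right_mono of_nat_mono) auto
  also have "\<dots> = (real (m - u0 choose k) / real (m choose k)) ^ (n - card S)"
    unfolding split using pos by (simp add: power_divide)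
  finally show ?thesis .
qed

lemma prob_colour_closed_le:
  assumes S: "S \<subseteq> {..<n}" and "k \<le> m"
  shows "measure_pmf.prob (RIG n m k) {F. colour_closed n F S}
     \<le> (real (m - u0 choose k) / real (m choose k)) ^ (n - card S)
       + (\<Sum>u<u0. real (m choose u) * (real (u choose k) / real (m choose k)) ^ card S)"
proof -
  let ?P = "measure_pmf.prob (RIG n m k)"
  have "{F. colour_closed n F S}
      \<subseteq> {F. u0 \<le> card (\<Union>(F ` S)) \<and> colour_closed n F S} \<union> {F. card (\<Union>(F ` S)) < u0}"
    by auto
  then have "?P {F. colour_closed n F S}
      \<le> ?P ({F. u0 \<le> card (\<Union>(F ` S)) \<and> colour_closed n F S} \<union> {F. card (\<Union>(F ` S)) < u0})"
    by (rule measure_pmf.finite_measure_mono) simp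
  also have "\<dots> \<le> ?P {F. u0 \<le> card (\<Union>(F ` S)) \<and> colour_closed n F S} + ?P {F. card (\<Union>(F ` S)) < u0}"
    by (rule measure_Un_le) simp_all
  also have "\<dots> \<le> (real (m - u0 choose k) / real (m choose k)) ^ (n - card S)
       + (\<Sum>u<u0. real (m choose u) * (real (u choose k) / real (m choose k)) ^ card S)"
    by (intro add_mono prob_closed_many_colours prob_few_colours S \<open>k \<le> m\<close>)
  finally show ?thesis .
qed

lemma prob_component_size_in:
  fixes u0 :: "nat \<Rightarrow> nat"
  assumes R: "R \<subseteq> {..n}" and "k \<le> m"
  shows "measure_pmf.prob (RIG n m k) {F. \<exists>C. rig_component n F C \<and> card C \<in> R}
   \<le> (\<Sum>s\<in>R. real (n choose s) * ((real (m - u0 s choose k) / real (m choose k)) ^ (n - s)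
         + (\<Sum>u<u0 s. real (m choose u) * (real (u choose k) / real (m choose k)) ^ s)))"
proof -
  let ?P = "measure_pmf.prob (RIG n m k)"
  let ?Ss = "\<lambda>s. {S. S \<subseteq> {..<n} \<and> card S = s}"
  have finR: "finite R" using R finite_subset by blast
  have finSs: "finite (?Ss s)" for s
    by (rule finite_subset[of _ "Pow {..<n}"]) auto
  have "{F. \<exists>C. rig_component n F C \<and> card C \<in> R} \<subseteq> (\<Union>s\<in>R. \<Union>S\<in>?Ss s. {F. colour_closed n F S})"
  proof
    fix F assume "F \<in> {F. \<exists>C. rig_component n F C \<and> card C \<in> R}"
    then obtain C where C: "rig_component n F C" "card C \<in> R" by blast
    then have "C \<in> ?Ss (card C)" "F \<in> {F. colour_closed n F C}"
      using rig_component_subset rig_component_colour_closed by auto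
    with C(2) show "F \<in> (\<Union>s\<in>R. \<Union>S\<in>?Ss s. {F. colour_closed n F S})" by blast
  qed
  then have "?P {F. \<exists>C. rig_component n F C \<and> card C \<in> R}
      \<le> ?P (\<Union>s\<in>R. \<Union>S\<in>?Ss s. {F. colour_closed n F S})"
    by (rule measure_pmf.finite_measure_mono) simp
  also have "\<dots> \<le> (\<Sum>s\<in>R. ?P (\<Union>S\<in>?Ss s. {F. colour_closed n F S}))"
    by (rule measure_pmf.finite_measure_subadditive_finite) (simp_all add: finR)
  also have "\<dots> \<le> (\<Sum>s\<in>R. \<Sum>S\<in>?Ss s. ?P {F. colour_closed n F S})"
    by (intro sum_mono measure_pmf.finite_measure_subadditive_finite finSs) simp
  also have "\<dots> \<le> (\<Sum>s\<in>R. \<Sum>S\<in>?Ss s. (real (m - u0 s choose k) / real (m choose k)) ^ (n - s)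
         + (\<Sum>u<u0 s. real (m choose u) * (real (u choose k) / real (m choose k)) ^ s))"
  proof (intro sum_mono)
    fix s S assume "S \<in> ?Ss s"
    then have S: "S \<subseteq> {..<n}" and s: "s = card S" by auto
    show "?P {F. colour_closed n F S} \<le> (real (m - u0 s choose k) / real (m choose k)) ^ (n - s)
         + (\<Sum>u<u0 s. real (m choose u) * (real (u choose k) / real (m choose k)) ^ s)"
      unfolding s by (rule prob_colour_closed_le[OF S \<open>k \<le> m\<close>])
  qed
  also have "\<dots> = (\<Sum>s\<in>R. real (n choose s) * ((real (m - u0 s choose k) / real (m choose k)) ^ (n - s)
         + (\<Sum>u<u0 s. real (m choose u) * (real (u choose k) / real (m choose k)) ^ s)))"
    by (simp add: n_subsets)
  finally show ?thesis .
qed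

section \<open>Estimates for a single component size\<close>

lemma few_colours_exponent_le:
  fixes k L l :: real
  assumes "k \<ge> 30" "L \<ge> 0" "l \<ge> ln 4" "l \<ge> ln 4 + L - ln k"
  shows "1 + L + 3 * k / 8 \<le> 3 * k / 4 * l"
proof -
  have ln4: "ln (4::real) \<ge> 4 / 3"
    using ln_realpow[of 2 2] ln2_ge_two_thirds by simp
  show ?thesis
  proof (cases "1 + L \<le> 3 / 5 * k")
    case True
    have "3 * k / 4 * (4 / 3) \<le> 3 * k / 4 * l"
      using assms ln4 by (intro mult_left_mono) auto
    with True assms show ?thesis by linarith
  next
    case False
    with assms ln_le_1_plus_quarter[of k] have "ln k \<le> L / 2" by simp
    with assms ln4 have "3 * k / 4 * (4 / 3 + L / 2) \<le> 3 * k / 4 * l"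
      by (intro mult_left_mono) auto
    moreover have "L \<le> 3 * k / 8 * L"
      using assms mult_right_mono[of 1 "3 * k / 8" L] by simp
    ultimately show ?thesis
      using assms(1) by (simp add: algebra_simps)
  qed
qed

lemma few_colours_log_le:
  fixes s k u L lq ly :: real
  assumes "s > 0" "k \<ge> 30" "L \<ge> 0" "0 \<le> u" "u \<le> s * k / 4"
    and "lq \<le> ly" "ly \<le> - ln 4" "ln 4 + L - ln k \<le> - ly"
  shows "s * (1 + L) + u * (1 - lq) + s * k * lq \<le> - (s * k) / 8"
proof -
  have "1 + L + 3 * k / 8 \<le> 3 * k / 4 * (- ly)"
    using assms by (intro few_colours_exponent_le) auto
  then have "s * (1 + L + 3 * k / 8) \<le> s * (3 * k / 4 * (- ly))"
    using assms(1) by (intro mult_left_mono) auto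
  moreover have "(s * k - u) * lq \<le> (3 * (s * k) / 4) * ly"
  proof -
    have "(s * k - u) * lq \<le> (s * k - u) * ly"
      using assms by (intro mult_left_mono) auto
    also have "\<dots> \<le> (3 * (s * k) / 4) * ly"
      using assms ln_ge_zero[of "4::real"] by (intro mult_right_mono_neg) linarith+
    finally show ?thesis .
  qed
  ultimately show ?thesis
    using assms(5) by (simp add: algebra_simps)
qed

lemma few_colours_term_le:
  fixes n m k s u :: nat
  assumes "1 \<le> u" "real u < real s * real k / 4" "1 \<le> s" "s \<le> n"
    and "30 \<le> k" "s * k \<le> m" "n \<le> m"
  shows "(exp 1 * real n / real s) ^ s * (exp 1 * real m / real u) ^ u * (real u / real m) ^ (k * s)
         \<le> exp (- (real s * real k) / 8)"
proof -
  define x where "x = real s * real k"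
  have pos: "real s > 0" "real n > 0" "real u > 0" "real k > 0"
    using assms by auto
  have xm: "x \<le> real m"
    unfolding x_def by (metis assms(6) of_nat_le_iff of_nat_mult)
  have x_pos: "x > 0" using pos by (simp add: x_def)
  with xm have m_pos: "real m > 0" by linarith
  define L where "L = ln (real n) - ln (real s)"
  define lq where "lq = ln (real u) - ln (real m)"
  define ly where "ly = ln x - ln 4 - ln (real m)"
  have "exp (1 + L) = exp 1 * real n / real s"
    using pos by (simp add: L_def exp_add exp_diff)
  then have e1: "(exp 1 * real n / real s) ^ s = exp (real s * (1 + L))"
    by (simp add: exp_of_nat_mult)
  have "exp (1 - lq) = exp 1 * real m / real u"
    using pos m_pos by (simp add: lq_def exp_diff)
  then have e2: "(exp 1 * real m / real u) ^ u = exp (real u * (1 - lq))"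
    by (simp add: exp_of_nat_mult)
  have "exp lq = real u / real m"
    using pos m_pos by (simp add: lq_def exp_diff)
  then have "exp (real (k * s) * lq) = (real u / real m) ^ (k * s)"
    using exp_of_nat_mult[of "k * s" lq] by simp
  then have e3: "(real u / real m) ^ (k * s) = exp (x * lq)"
    by (simp add: x_def ac_simps)
  have "ln (real u) \<le> ln (x / 4)"
    using assms(2) pos by (simp add: x_def)
  then have "lq \<le> ly"
    using x_pos by (simp add: lq_def ly_def ln_div)
  moreover have "ln x \<le> ln (real m)"
    using xm x_pos by simp
  moreover have "ln (real n) \<le> ln (real m)" and "ln x = ln (real s) + ln (real k)"
    using assms pos by (simp_all add: x_def ln_mult)
  ultimately have "real s * (1 + L) + real u * (1 - lq) + x * lq \<le> - x / 8"
    unfolding x_def using assms pos xm x_pos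
    by (intro few_colours_log_le) (auto simp: L_def ly_def x_def)
  then have "exp (real s * (1 + L)) * exp (real u * (1 - lq)) * exp (x * lq) \<le> exp (- x / 8)"
    by (simp add: exp_add[symmetric])
  then show ?thesis
    using e1 e2 e3 by (simp add: x_def)
qed

definition colour_threshold :: "nat \<Rightarrow> nat \<Rightarrow> nat" where
  "colour_threshold s k = nat \<lceil>real s * real k / 4\<rceil>"

lemma colour_threshold_bounds:
  "real s * real k / 4 \<le> real (colour_threshold s k)"
  "real (colour_threshold s k) \<le> real s * real k / 4 + 1"
proof -
  have "real (colour_threshold s k) = of_int \<lceil>real s * real k / 4\<rceil>"
    unfolding colour_threshold_def by simp
  then show "real s * real k / 4 \<le> real (colour_threshold s k)"
    "real (colour_threshold s k) \<le> real s * real k / 4 + 1"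
    using le_of_int_ceiling of_int_ceiling_le_add_one by simp_all
qed

lemma less_colour_threshold_iff:
  "u < colour_threshold s k \<longleftrightarrow> real u < real s * real k / 4"
  unfolding colour_threshold_def by (simp add: less_ceiling_iff zless_nat_eq_int_zless)

locale medium_component_size =
  fixes n m k s :: nat
  assumes k_ge: "30 \<le> k" and nm: "n \<le> m"
    and density: "real m * ln (real n) \<le> real k ^ 2 * real n" and ln_ge: "1 \<le> ln (real n)"
    and s_ge: "exp 1 * real n powr (8/9) \<le> real s" and s_le: "real s \<le> real n / 2"
    and skm: "s * k \<le> m" and sk_ge: "1024 \<le> real s * real k"
begin

lemma n_pos: "real n > 0"
  using ln_ge by (cases "n = 0") auto

lemma s_pos: "real s > 0"
proof -
  have "0 < exp 1 * real n powr (8/9)"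
    using n_pos by simp
  with s_ge show ?thesis by linarith
qed

lemma s_le_n: "s \<le> n"
  using s_le n_pos by linarith

lemma sk_le_m: "real s * real k \<le> real m"
  by (metis skm of_nat_le_iff of_nat_mult)

lemma k_le_m: "k \<le> m"
proof -
  have "1 * k \<le> s * k"
    using s_pos by (intro mult_le_mono1) simp
  with skm show ?thesis by linarith
qed

lemma binomial_le_exp_ln_div_9: "real (n choose s) \<le> exp (real s * ln (real n) / 9)"
proof -
  have "exp 1 * real n / real s \<le> exp 1 * real n / (exp 1 * exp (8/9 * ln (real n)))"
    using s_ge s_pos n_pos by (intro divide_left_mono) (auto simp: powr_def)
  also have "\<dots> = exp (ln (real n)) / exp (8/9 * ln (real n))"
    using n_pos by simp
  also have "\<dots> = exp (ln (real n) / 9)"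
    unfolding exp_diff[symmetric] by (rule arg_cong[where f = exp]) linarith
  finally have "(exp 1 * real n / real s) ^ s \<le> exp (ln (real n) / 9) ^ s"
    using n_pos s_pos by (intro power_mono) auto
  also have "\<dots> = exp (real s * ln (real n) / 9)"
    by (simp add: exp_of_nat_mult[symmetric])
  finally show ?thesis
    using binomial_le_exp_mult_div_power[of s n] s_pos by simp
qed

lemma large_union_term_le:
  "real (n choose s) * (real (m - colour_threshold s k choose k) / real (m choose k)) ^ (n - s)
   \<le> exp (- real s / 72)"
proof -
  define u0 where "u0 = colour_threshold s k"
  have u0_ge: "real s * real k / 4 \<le> real u0" and u0_le: "real u0 \<le> real m"
    using colour_threshold_bounds[of s k] sk_le_m sk_ge unfolding u0_def by linarith+
  have "(real (m - u0 choose k) / real (m choose k)) ^ (n - s)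
      \<le> exp (- real (k * (n - s)) * real u0 / real m)"
    using u0_le k_le_m k_ge by (intro binomial_ratio_power_le_exp) auto
  also have "\<dots> \<le> exp (- real s * ln (real n) / 8)"
  proof -
    have "real (n - s) \<ge> real n / 2"
      using s_le_n s_le by (simp add: of_nat_diff)
    have m_pos: "real m > 0"
      using k_le_m k_ge by simp
    have "real s * ln (real n) / 8 \<le> real s / 8 * (real k ^ 2 * real n) / real m"
      using density s_pos m_pos by (simp add: field_simps mult_left_mono)
    also have "\<dots> = (real s * real k / 4) * real k * (real n / 2) / real m"
      by (simp add: power2_eq_square)
    also have "\<dots> \<le> real u0 * real k * real (n - s) / real m"
      using u0_ge \<open>real (n - s) \<ge> real n / 2\<close> m_pos s_pos n_pos
      by (intro divide_right_mono mult_mono) auto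
    also have "\<dots> = real (k * (n - s)) * real u0 / real m"
      by simp
    finally show ?thesis
      by simp
  qed
  finally have "real (n choose s) * (real (m - u0 choose k) / real (m choose k)) ^ (n - s)
      \<le> exp (real s * ln (real n) / 9) * exp (- real s * ln (real n) / 8)"
    using binomial_le_exp_ln_div_9 by (intro mult_mono) auto
  also have "\<dots> = exp (- (real s * ln (real n) / 72))"
    by (simp add: exp_add[symmetric])
  also have "\<dots> \<le> exp (- real s / 72)"
    using ln_ge s_pos by simp
  finally show ?thesis
    unfolding u0_def .
qed

lemma small_union_term_le:
  "real (n choose s) * (\<Sum>u<colour_threshold s k. real (m choose u) * (real (u choose k) / real (m choose k)) ^ s)
   \<le> exp (- real s / 72)"
proof -
  define x where "x = real s * real k"
  have s_ge_1: "1 \<le> s" using s_pos by simp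
  have term_le: "real (n choose s) * (real (m choose u) * (real (u choose k) / real (m choose k)) ^ s)
      \<le> exp (- x / 8)" if "u < colour_threshold s k" for u
  proof (cases "u = 0")
    case True
    with k_ge s_ge_1 show ?thesis by (simp add: binomial_eq_0 power_0_left)
  next
    case False
    have u_less: "real u < x / 4"
      using that by (simp add: less_colour_threshold_iff x_def)
    with sk_le_m sk_ge have "u \<le> m" unfolding x_def by linarith
    have "(real (u choose k) / real (m choose k)) ^ s \<le> ((real u / real m) ^ k) ^ s"
      using \<open>u \<le> m\<close> k_le_m by (intro power_mono binomial_ratio_le_power) auto
    then have "real (n choose s) * (real (m choose u) * (real (u choose k) / real (m choose k)) ^ s)
      \<le> (exp 1 * real n / real s) ^ s * ((exp 1 * real m / real u) ^ u * (real u / real m) ^ (k * s))"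
      using binomial_le_exp_mult_div_power[OF s_ge_1, of n] binomial_le_exp_mult_div_power[of u m] False
      by (intro mult_mono) (auto simp: power_mult)
    also have "\<dots> \<le> exp (- x / 8)"
      using few_colours_term_le[of u s k n m] False u_less s_ge_1 s_le_n k_ge skm nm
      by (simp add: x_def mult.assoc)
    finally show ?thesis .
  qed
  have "real (n choose s) * (\<Sum>u<colour_threshold s k. real (m choose u) * (real (u choose k) / real (m choose k)) ^ s)
      \<le> (\<Sum>u<colour_threshold s k. exp (- x / 8))"
    unfolding sum_distrib_left by (intro sum_mono term_le) simp
  also have "\<dots> \<le> x * exp (- x / 8)"
    using colour_threshold_bounds(2)[of s k] sk_ge by (simp add: x_def mult_right_mono)
  also have "\<dots> \<le> exp (x / 16) * exp (- x / 8)"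
    using sk_ge le_exp_div_16[of x] by (simp add: x_def)
  also have "\<dots> = exp (- x / 16)"
    by (simp add: exp_add[symmetric])
  also have "\<dots> \<le> exp (- real s / 72)"
    using k_ge s_pos by (simp add: x_def)
  finally show ?thesis .
qed

lemma component_size_term_le:
  "real (n choose s) *
     ((real (m - colour_threshold s k choose k) / real (m choose k)) ^ (n - s)
      + (\<Sum>u<colour_threshold s k. real (m choose u) * (real (u choose k) / real (m choose k)) ^ s))
   \<le> 2 * exp (- real s / 72)"
  using large_union_term_le small_union_term_le by (simp add: distrib_left)

end

lemma thirty_le_of_density:
  fixes n m k :: nat
  assumes "n \<le> m" "real m * ln (real n) \<le> real k ^ 2 * real n" "900 \<le> ln (real n)"
  shows "30 \<le> k"
proof -
  have n_pos: "real n > 0" using assms(3) by (cases "n = 0") auto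
  have "real n * 900 \<le> real n * ln (real n)"
    using assms(3) n_pos by (intro mult_left_mono) auto
  also have "\<dots> \<le> real m * ln (real n)"
    using assms(1,3) by (intro mult_right_mono) auto
  also have "\<dots> \<le> real k ^ 2 * real n"
    by (rule assms(2))
  finally have "30\<^sup>2 \<le> (real k)\<^sup>2"
    using n_pos by simp
  then show ?thesis
    using power2_le_imp_le[of 30 "real k"] by simp
qed

lemma exp_mult_powr_8_9_ge:
  fixes n :: nat
  assumes "900 \<le> ln (real n)"
  shows "1024 \<le> exp 1 * real n powr (8/9)"
proof -
  have "real n > 0" using assms by (cases "n = 0") auto
  then have "real n powr (8/9) = exp (8/9 * ln (real n))"
    by (simp add: powr_def)
  then have "801 \<le> real n powr (8/9)"
    using exp_ge_add_one_self[of "8/9 * ln (real n)"] assms by linarith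
  then have "2 * 801 \<le> exp 1 * real n powr (8/9)"
    using exp_ge_add_one_self[of 1] by (intro mult_mono) auto
  then show ?thesis by simp
qed

lemma card_rig_component_le: "rig_component n F C \<Longrightarrow> card C \<le> n"
  using card_mono[OF _ rig_component_subset] by fastforce

lemma medium_size_term_le:
  fixes n m k s :: nat
  assumes "1 \<le> k" "n \<le> m"
    and density: "real m * ln (real n) \<le> real k ^ 2 * real n" and ln_ge: "900 \<le> ln (real n)"
    and s: "exp 1 * real n powr (8/9) \<le> real s" "real s \<le> real m / real k" "real s \<le> real n / 2"
  shows "real (n choose s) *
     ((real (m - colour_threshold s k choose k) / real (m choose k)) ^ (n - s)
      + (\<Sum>u<colour_threshold s k. real (m choose u) * (real (u choose k) / real (m choose k)) ^ s))
   \<le> 2 * exp (- real s / 72)"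
proof -
  have "real s * real k \<le> real m"
    using s(2) \<open>1 \<le> k\<close> by (simp add: field_simps)
  then have "s * k \<le> m"
    by (metis of_nat_le_iff of_nat_mult)
  have "real s * 1 \<le> real s * real k"
    using \<open>1 \<le> k\<close> by (intro mult_left_mono) auto
  with s(1) exp_mult_powr_8_9_ge[OF ln_ge] have "1024 \<le> real s * real k"
    by linarith
  then interpret medium_component_size n m k s
    using \<open>s * k \<le> m\<close> thirty_le_of_density[OF \<open>n \<le> m\<close> density ln_ge] \<open>n \<le> m\<close> density ln_ge s
    by unfold_locales auto
  show ?thesis
    by (rule component_size_term_le)
qed

lemma prob_medium_component_le:
  fixes n m k :: nat
  assumes "1 \<le> k" "k \<le> m" "n \<le> m"
    and density: "real m * ln (real n) \<le> real k ^ 2 * real n" and ln_ge: "900 \<le> ln (real n)"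
  shows "measure_pmf.prob (RIG n m k)
            {F. \<exists>C. rig_component n F C \<and>
                    exp 1 * real n powr (8/9) \<le> real (card C) \<and>
                    real (card C) \<le> min (real m / real k) (real n / 2)}
         \<le> 2 * (real n + 1) * exp (- (exp 1 * real n powr (8/9)) / 72)"
    (is "measure_pmf.prob _ ?E \<le> _")
proof -
  define s0 where "s0 = exp 1 * real n powr (8/9)"
  define R where "R = {s. s \<le> n \<and> s0 \<le> real s \<and> real s \<le> min (real m / real k) (real n / 2)}"
  let ?term = "\<lambda>s. real (n choose s) *
     ((real (m - colour_threshold s k choose k) / real (m choose k)) ^ (n - s)
      + (\<Sum>u<colour_threshold s k. real (m choose u) * (real (u choose k) / real (m choose k)) ^ s))"
  have "?E \<subseteq> {F. \<exists>C. rig_component n F C \<and> card C \<in> R}"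
    unfolding R_def s0_def by (auto dest: card_rig_component_le)
  then have "measure_pmf.prob (RIG n m k) ?E
      \<le> measure_pmf.prob (RIG n m k) {F. \<exists>C. rig_component n F C \<and> card C \<in> R}"
    by (rule measure_pmf.finite_measure_mono) simp
  also have "\<dots> \<le> (\<Sum>s\<in>R. ?term s)"
    by (rule prob_component_size_in) (auto simp: R_def \<open>k \<le> m\<close>)
  also have "\<dots> \<le> (\<Sum>s\<in>R. 2 * exp (- s0 / 72))"
  proof (rule sum_mono)
    fix s assume "s \<in> R"
    then have s: "s0 \<le> real s" "real s \<le> real m / real k" "real s \<le> real n / 2"
      unfolding R_def by auto
    then have "exp (- real s / 72) \<le> exp (- s0 / 72)"
      by simp
    with medium_size_term_le[OF assms(1,3) density ln_ge s[unfolded s0_def]]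
    show "?term s \<le> 2 * exp (- s0 / 72)"
      by linarith
  qed
  also have "\<dots> \<le> (real n + 1) * (2 * exp (- s0 / 72))"
    using card_mono[of "{..n}" R] by (simp add: R_def subset_eq mult_right_mono)
  finally show ?thesis
    by (simp add: s0_def algebra_simps)
qed

theorem lemma7:
  fixes k m :: "nat \<Rightarrow> nat"
  assumes km: "\<And>n. 1 \<le> k n \<and> k n \<le> m n"
    and mn: "\<And>n. m n \<ge> n"
    and lim: "liminf (\<lambda>n. ereal (real (k n) ^ 2 * real n / (real (m n) * ln (real n)))) > 1"
  shows "(\<lambda>n. measure_pmf.prob (RIG n (m n) (k n))
            {F. \<exists>C. rig_component n F C \<and>
                    exp 1 * real n powr (8/9) \<le> real (card C) \<and>
                    real (card C) \<le> min (real (m n) / real (k n)) (real n / 2)})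
         \<longlonglongrightarrow> 0"
proof (rule tendsto_sandwich[OF _ _ tendsto_const])
  have "eventually (\<lambda>n. 1 < real (k n) ^ 2 * real n / (real (m n) * ln (real n))) sequentially"
    using less_LiminfD[OF lim] by simp
  moreover have "eventually (\<lambda>n. 900 \<le> ln (real n)) sequentially"
    by real_asymp
  ultimately show "eventually (\<lambda>n. measure_pmf.prob (RIG n (m n) (k n))
            {F. \<exists>C. rig_component n F C \<and>
                    exp 1 * real n powr (8/9) \<le> real (card C) \<and>
                    real (card C) \<le> min (real (m n) / real (k n)) (real n / 2)}
        \<le> 2 * (real n + 1) * exp (- (exp 1 * real n powr (8/9)) / 72)) sequentially"
  proof eventually_elim
    case (elim n)
    have "0 < ln (real n)" "0 < real (m n)"
      using elim(2) mn[of n] by (linarith, cases "n = 0") auto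
    then have "0 < real (m n) * ln (real n)"
      by simp
    with elim(1) have "real (m n) * ln (real n) \<le> real (k n) ^ 2 * real n"
      by (simp add: less_divide_eq)
    with elim km[of n] mn[of n] show ?case
      by (intro prob_medium_component_le) auto
  qed
  show "(\<lambda>n. 2 * (real n + 1) * exp (- (exp 1 * real n powr (8/9)) / 72)) \<longlonglongrightarrow> 0"
    by real_asymp
qed simp

end
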